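(* Let $X$ be a finite connected rack and let $S$ be a minimal element of $\overline{\mathcal{R}(X)}$. Then $\mathcal{R}(X)$ is pure if and only if $\overline{\mathcal{R}(X)}_{\ge S}=\{T\in\overline{\mathcal{R}(X)}: T\supseteq S\}$ is pure.
   Context: A rack is a set $X$ with a binary operation $\triangleright$ such that $a\triangleright(b\triangleright c)=(a\triangleright b)\triangleright(a\triangleright c)$ for all $a,b,c$, and each map $\phi_a\colon x\mapsto a\triangleright x$ is a bijection of $X$. Subracks are subsets closed under $\triangleright$ (including $\emptyset$); $\mathcal{R}(X)$ is the lattice of subracks under inclusion and $\overline{\mathcal{R}(X)}=\mathcal{R}(X)\setminus\{X,\emptyset\}$. $\mathsf{Inn}(X)=\langle\phi_a:a\in X\rangle$, and $X$ is connected if $\mathsf{Inn}(X)$ acts transitively on $X$. A finite poset is pure if all of its maximal chains have the same length. *)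

theory Defs
  imports Main
begin

definition rack :: "'a set \<Rightarrow> ('a \<Rightarrow> 'a \<Rightarrow> 'a) \<Rightarrow> bool" where
  "rack X op \<longleftrightarrow>
     (\<forall>a\<in>X. \<forall>b\<in>X. op a b \<in> X) \<and>
     (\<forall>a\<in>X. \<forall>b\<in>X. \<forall>c\<in>X. op a (op b c) = op (op a b) (op a c)) \<and>
     (\<forall>a\<in>X. bij_betw (op a) X X)"

inductive_set Inn :: "'a set \<Rightarrow> ('a \<Rightarrow> 'a \<Rightarrow> 'a) \<Rightarrow> ('a \<Rightarrow> 'a) set"
  for X op where
  Inn_id: "id \<in> Inn X op"
| Inn_phi: "g \<in> Inn X op \<Longrightarrow> a \<in> X \<Longrightarrow> op a \<circ> g \<in> Inn X op"
| Inn_phi_inv: "g \<in> Inn X op \<Longrightarrow> a \<in> X \<Longrightarrow> inv_into X (op a) \<circ> g \<in> Inn X op"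

definition rack_connected :: "'a set \<Rightarrow> ('a \<Rightarrow> 'a \<Rightarrow> 'a) \<Rightarrow> bool" where
  "rack_connected X op \<longleftrightarrow> (\<forall>x\<in>X. \<forall>y\<in>X. \<exists>g\<in>Inn X op. g x = y)"

text \<open>Subracks (including the empty set) and the lattice R(X).\<close>
definition subracks :: "'a set \<Rightarrow> ('a \<Rightarrow> 'a \<Rightarrow> 'a) \<Rightarrow> 'a set set" where
  "subracks X op = {S. S \<subseteq> X \<and> (\<forall>a\<in>S. \<forall>b\<in>S. op a b \<in> S)}"

definition proper_subracks :: "'a set \<Rightarrow> ('a \<Rightarrow> 'a \<Rightarrow> 'a) \<Rightarrow> 'a set set" where
  "proper_subracks X op = subracks X op - {X, {}}"

definition incl_chain :: "'a set set \<Rightarrow> 'a set set \<Rightarrow> bool" where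
  "incl_chain P C \<longleftrightarrow> C \<subseteq> P \<and> (\<forall>A\<in>C. \<forall>B\<in>C. A \<subseteq> B \<or> B \<subseteq> A)"

definition incl_maxchain :: "'a set set \<Rightarrow> 'a set set \<Rightarrow> bool" where
  "incl_maxchain P C \<longleftrightarrow> incl_chain P C \<and> (\<forall>D. incl_chain P D \<and> C \<subseteq> D \<longrightarrow> D = C)"

text \<open>A finite poset (here: a finite family of sets under inclusion) is pure if all
  its maximal chains have the same length (equivalently, the same cardinality).\<close>
definition pure :: "'a set set \<Rightarrow> bool" where
  "pure P \<longleftrightarrow> (\<forall>C D. incl_maxchain P C \<and> incl_maxchain P D \<longrightarrow> card C = card D)"

end

theory Submission
  imports Defs
begin

text \<open>Removing the empty subrack, every maximal chain of nonempty subracks starts at a minimal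
  one \<open>M\<close> and is a maximal chain of the upper set of \<open>M\<close>. Since \<open>X\<close> is connected, \<open>Inn(X)\<close>
  acts transitively on the minimal subracks: if \<open>f x = y\<close> with \<open>x \<in> M\<close>, \<open>y \<in> M'\<close>, then \<open>f ` M\<close>
  is again minimal and meets \<open>M'\<close>, so \<open>f ` M = M'\<close>. Taking images under \<open>f\<close> is an inclusion
  isomorphism between the two upper sets, so all maximal chains have the length of one through
  \<open>S\<close>. Finally the elements \<open>{}\<close> and \<open>X\<close>, comparable to everything, do not affect purity.\<close>

lemma incl_chain_iff_subset_chain: "incl_chain P C \<longleftrightarrow> subset.chain P C"
  unfolding incl_chain_def subset_chain_def ..

lemma finite_incl_maxchain:
  "finite P \<Longrightarrow> incl_maxchain P C \<Longrightarrow> finite C"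
  unfolding incl_maxchain_def incl_chain_def by (meson finite_subset)

lemma incl_maxchain_nonempty:
  assumes "P \<noteq> {}" and "incl_maxchain P C"
  shows "C \<noteq> {}"
proof
  assume "C = {}"
  obtain A where "A \<in> P" using assms(1) by blast
  then have "incl_chain P {A}" unfolding incl_chain_def by blast
  then show False using assms(2) \<open>C = {}\<close> unfolding incl_maxchain_def by blast
qed

subsection \<open>Elements comparable to everything\<close>

lemma incl_maxchain_remove_comparable:
  assumes t: "t \<in> P" and cmp: "\<forall>A\<in>P. A \<subseteq> t \<or> t \<subseteq> A" and D: "incl_maxchain P D"
  shows "t \<in> D" and "incl_maxchain (P - {t}) (D - {t})"
proof -
  have "incl_chain P (insert t D)" using D t cmp unfolding incl_maxchain_def incl_chain_def by blast
  then show tD: "t \<in> D" using D unfolding incl_maxchain_def by blast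
  show "incl_maxchain (P - {t}) (D - {t})"
    unfolding incl_maxchain_def
  proof (intro conjI allI impI)
    show "incl_chain (P - {t}) (D - {t})" using D unfolding incl_maxchain_def incl_chain_def by blast
    fix E assume E: "incl_chain (P - {t}) E \<and> D - {t} \<subseteq> E"
    have "incl_chain P (insert t E)" using E t cmp unfolding incl_chain_def by blast
    moreover have "D \<subseteq> insert t E" using E by blast
    ultimately have "insert t E = D" using D unfolding incl_maxchain_def by blast
    moreover have "t \<notin> E" using E unfolding incl_chain_def by blast
    ultimately show "E = D - {t}" by blast
  qed
qed

lemma incl_maxchain_insert_comparable:
  assumes t: "t \<in> P" and cmp: "\<forall>A\<in>P. A \<subseteq> t \<or> t \<subseteq> A" and C: "incl_maxchain (P - {t}) C"
  shows "t \<notin> C" and "incl_maxchain P (insert t C)"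
proof -
  show tC: "t \<notin> C" using C unfolding incl_maxchain_def incl_chain_def by blast
  show "incl_maxchain P (insert t C)" unfolding incl_maxchain_def
  proof (intro conjI allI impI)
    show "incl_chain P (insert t C)" using C t cmp unfolding incl_maxchain_def incl_chain_def by blast
    fix E assume E: "incl_chain P E \<and> insert t C \<subseteq> E"
    have "incl_chain (P - {t}) (E - {t})" using E unfolding incl_chain_def by blast
    moreover have "C \<subseteq> E - {t}" using E tC by blast
    ultimately have "E - {t} = C" using C unfolding incl_maxchain_def by blast
    then show "E = insert t C" using E by blast
  qed
qed

lemma pure_remove_comparable:
  assumes fin: "finite P" and t: "t \<in> P" and cmp: "\<forall>A\<in>P. A \<subseteq> t \<or> t \<subseteq> A"
  shows "pure P \<longleftrightarrow> pure (P - {t})"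
proof
  assume "pure P"
  then show "pure (P - {t})" unfolding pure_def
    using incl_maxchain_insert_comparable[OF t cmp] finite_incl_maxchain[of "P - {t}"] fin
    by (metis card_insert_disjoint finite_Diff Suc_inject)
next
  assume "pure (P - {t})"
  then show "pure P" unfolding pure_def
    using incl_maxchain_remove_comparable[OF t cmp] finite_incl_maxchain[OF fin]
    by (metis card.remove)
qed

subsection \<open>Upper sets of minimal elements\<close>

definition incl_upset :: "'a set set \<Rightarrow> 'a set \<Rightarrow> 'a set set" where
  "incl_upset P M = {T \<in> P. M \<subseteq> T}"

definition incl_minimal :: "'a set set \<Rightarrow> 'a set \<Rightarrow> bool" where
  "incl_minimal P M \<longleftrightarrow> M \<in> P \<and> (\<forall>T\<in>P. T \<subseteq> M \<longrightarrow> T = M)"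

lemma incl_minimalD: "incl_minimal P M \<Longrightarrow> T \<in> P \<Longrightarrow> T \<subseteq> M \<Longrightarrow> T = M"
  unfolding incl_minimal_def by blast

lemma incl_maxchain_of_upset:
  assumes M: "incl_minimal P M" and C: "incl_maxchain (incl_upset P M) C"
  shows "incl_maxchain P C"
  unfolding incl_maxchain_def
proof (intro conjI allI impI)
  have CU: "C \<subseteq> incl_upset P M" and cmp: "\<forall>A\<in>C. \<forall>B\<in>C. A \<subseteq> B \<or> B \<subseteq> A"
    and maxC: "\<And>D. incl_chain (incl_upset P M) D \<Longrightarrow> C \<subseteq> D \<Longrightarrow> D = C"
    using C unfolding incl_maxchain_def incl_chain_def by auto
  have "M \<in> incl_upset P M" using M unfolding incl_upset_def incl_minimal_def by simp
  then have "incl_chain (incl_upset P M) (insert M C)"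
    using CU cmp unfolding incl_chain_def incl_upset_def by blast
  then have MC: "M \<in> C" using maxC by blast
  show "incl_chain P C" using CU cmp unfolding incl_chain_def incl_upset_def by blast
  fix E assume E: "incl_chain P E \<and> C \<subseteq> E"
  have "M \<subseteq> e" if "e \<in> E" for e
  proof -
    have "e \<in> P" "e \<subseteq> M \<or> M \<subseteq> e" using E MC that unfolding incl_chain_def by blast+
    then show ?thesis using incl_minimalD[OF M] by blast
  qed
  then have "incl_chain (incl_upset P M) E" using E unfolding incl_chain_def incl_upset_def by blast
  then show "E = C" using E maxC by blast
qed

lemma incl_maxchain_in_upset:
  assumes fin: "finite P" and "P \<noteq> {}" and C: "incl_maxchain P C"
  obtains M where "incl_minimal P M" and "incl_maxchain (incl_upset P M) C"
proof
  have chain: "subset.chain P C" and maxC: "\<And>D. incl_chain P D \<Longrightarrow> C \<subseteq> D \<Longrightarrow> D = C"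
    using C unfolding incl_maxchain_def incl_chain_iff_subset_chain by auto
  have CP: "C \<subseteq> P" and cmp: "\<forall>A\<in>C. \<forall>B\<in>C. A \<subseteq> B \<or> B \<subseteq> A"
    using chain unfolding subset_chain_def by auto
  have least: "\<Inter>C \<in> C"
    using Inter_in_chain[OF finite_incl_maxchain[OF fin C] incl_maxchain_nonempty[OF \<open>P \<noteq> {}\<close> C] chain] .
  show "incl_minimal P (\<Inter>C)" unfolding incl_minimal_def
  proof (intro conjI ballI impI)
    show "\<Inter>C \<in> P" using least CP by blast
    fix T assume T: "T \<in> P" "T \<subseteq> \<Inter>C"
    then have "\<forall>c\<in>C. T \<subseteq> c" by blast
    then have "incl_chain P (insert T C)" using T(1) CP cmp unfolding incl_chain_def by blast
    then have "T \<in> C" using maxC by blast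
    then show "T = \<Inter>C" using T(2) by blast
  qed
  show "incl_maxchain (incl_upset P (\<Inter>C)) C"
    unfolding incl_maxchain_def
  proof (intro conjI allI impI)
    show "incl_chain (incl_upset P (\<Inter>C)) C"
      using CP cmp unfolding incl_chain_def incl_upset_def by blast
    fix E assume E: "incl_chain (incl_upset P (\<Inter>C)) E \<and> C \<subseteq> E"
    then have "incl_chain P E" unfolding incl_chain_def incl_upset_def by blast
    then show "E = C" using E maxC by blast
  qed
qed

subsection \<open>Inclusion isomorphisms\<close>

definition incl_iso :: "('a set \<Rightarrow> 'b set) \<Rightarrow> 'a set set \<Rightarrow> 'b set set \<Rightarrow> bool" where
  "incl_iso h P Q \<longleftrightarrow> bij_betw h P Q \<and> (\<forall>A\<in>P. \<forall>B\<in>P. h A \<subseteq> h B \<longleftrightarrow> A \<subseteq> B)"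

lemma incl_iso_inv_into:
  assumes "incl_iso h P Q"
  shows "incl_iso (inv_into P h) Q P"
proof -
  have b: "bij_betw h P Q" and mono: "\<forall>A\<in>P. \<forall>B\<in>P. h A \<subseteq> h B \<longleftrightarrow> A \<subseteq> B"
    using assms unfolding incl_iso_def by auto
  have "\<forall>A\<in>Q. inv_into P h A \<in> P \<and> h (inv_into P h A) = A"
    using b by (metis bij_betw_def bij_betw_inv_into_right inv_into_into)
  then show ?thesis
    unfolding incl_iso_def using bij_betw_inv_into[OF b] mono by metis
qed

lemma incl_chain_image:
  assumes h: "incl_iso h P Q" and C: "incl_chain P C"
  shows "incl_chain Q (h ` C)"
proof -
  have "h ` C \<subseteq> Q" using h C unfolding incl_iso_def incl_chain_def bij_betw_def by blast
  moreover have "\<forall>A\<in>C. \<forall>B\<in>C. h A \<subseteq> h B \<or> h B \<subseteq> h A"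
    using h C unfolding incl_iso_def incl_chain_def by (meson subsetD)
  ultimately show ?thesis unfolding incl_chain_def by blast
qed

lemma incl_maxchain_image:
  assumes h: "incl_iso h P Q" and C: "incl_maxchain P C"
  shows "incl_maxchain Q (h ` C)"
  unfolding incl_maxchain_def
proof (intro conjI allI impI)
  have b: "bij_betw h P Q" using h unfolding incl_iso_def by blast
  have CP: "C \<subseteq> P" and maxC: "\<And>D. incl_chain P D \<Longrightarrow> C \<subseteq> D \<Longrightarrow> D = C"
    using C unfolding incl_maxchain_def incl_chain_def by auto
  show "incl_chain Q (h ` C)" using incl_chain_image h C unfolding incl_maxchain_def by blast
  fix E assume E: "incl_chain Q E \<and> h ` C \<subseteq> E"
  then have EQ: "E \<subseteq> Q" unfolding incl_chain_def by blast
  have "C \<subseteq> inv_into P h ` E"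
  proof
    fix A assume A: "A \<in> C"
    then have "inv_into P h (h A) = A" using CP b by (simp add: bij_betw_inv_into_left subsetD)
    moreover have "h A \<in> E" using A E by blast
    ultimately show "A \<in> inv_into P h ` E" by (metis imageI)
  qed
  moreover have "incl_chain P (inv_into P h ` E)"
    using incl_chain_image[OF incl_iso_inv_into[OF h]] E by blast
  ultimately have "inv_into P h ` E = C" using maxC by blast
  moreover have "h ` inv_into P h ` E = E"
    using image_inv_into_cancel[OF bij_betw_imp_surj_on[OF b] EQ] .
  ultimately show "E = h ` C" by simp
qed

lemma card_incl_maxchain_image:
  assumes h: "incl_iso h P Q" and C: "incl_maxchain P C"
  shows "card (h ` C) = card C"
proof -
  have "inj_on h P" using h unfolding incl_iso_def bij_betw_def by blast
  moreover have "C \<subseteq> P" using C unfolding incl_maxchain_def incl_chain_def by blast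
  ultimately show ?thesis by (meson card_image inj_on_subset)
qed

lemma incl_iso_minimal:
  assumes h: "incl_iso h P P" and M: "incl_minimal P M"
  shows "incl_minimal P (h M)"
  unfolding incl_minimal_def
proof (intro conjI ballI impI)
  have b: "bij_betw h P P" and mono: "\<And>A B. A \<in> P \<Longrightarrow> B \<in> P \<Longrightarrow> h A \<subseteq> h B \<longleftrightarrow> A \<subseteq> B"
    using h unfolding incl_iso_def by auto
  have MP: "M \<in> P" using M unfolding incl_minimal_def by blast
  then show "h M \<in> P" using b by (simp add: bij_betw_apply)
  fix T assume T: "T \<in> P" "T \<subseteq> h M"
  then obtain T0 where T0: "T0 \<in> P" "T = h T0" using b by (metis bij_betw_imp_surj_on imageE)
  then have "T0 \<subseteq> M" using T(2) mono[OF T0(1) MP] by simp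
  then have "T0 = M" using incl_minimalD[OF M T0(1)] by blast
  then show "T = h M" using T0(2) by simp
qed

lemma incl_iso_upset:
  assumes h: "incl_iso h P P" and M: "M \<in> P"
  shows "incl_iso h (incl_upset P M) (incl_upset P (h M))"
proof -
  have b: "bij_betw h P P" and mono: "\<And>A B. A \<in> P \<Longrightarrow> B \<in> P \<Longrightarrow> h A \<subseteq> h B \<longleftrightarrow> A \<subseteq> B"
    using h unfolding incl_iso_def by auto
  have UP: "incl_upset P M \<subseteq> P" unfolding incl_upset_def by blast
  have "h ` incl_upset P M = incl_upset P (h M)"
  proof
    show "h ` incl_upset P M \<subseteq> incl_upset P (h M)"
    proof
      fix T assume "T \<in> h ` incl_upset P M"
      then obtain T0 where "T0 \<in> P" "M \<subseteq> T0" "T = h T0" unfolding incl_upset_def by blast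
      then show "T \<in> incl_upset P (h M)"
        using mono[OF M] bij_betw_apply[OF b] unfolding incl_upset_def by blast
    qed
    show "incl_upset P (h M) \<subseteq> h ` incl_upset P M"
    proof
      fix T assume T: "T \<in> incl_upset P (h M)"
      then obtain T0 where "T0 \<in> P" "T = h T0" using b unfolding incl_upset_def bij_betw_def by blast
      then show "T \<in> h ` incl_upset P M" using T mono[OF M] unfolding incl_upset_def by blast
    qed
  qed
  moreover have "inj_on h (incl_upset P M)"
    using bij_betw_imp_inj_on[OF b] UP by (rule inj_on_subset)
  moreover have "\<forall>A\<in>incl_upset P M. \<forall>B\<in>incl_upset P M. h A \<subseteq> h B \<longleftrightarrow> A \<subseteq> B"
    using mono UP by (metis subsetD)
  ultimately show ?thesis unfolding incl_iso_def bij_betw_def by blast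
qed

lemma pure_iff_pure_upset:
  assumes fin: "finite P" and S: "incl_minimal P S"
    and trans: "\<And>M. incl_minimal P M \<Longrightarrow> \<exists>h. incl_iso h (incl_upset P M) (incl_upset P S)"
  shows "pure P \<longleftrightarrow> pure (incl_upset P S)"
proof
  assume "pure P"
  then show "pure (incl_upset P S)"
    unfolding pure_def using incl_maxchain_of_upset[OF S] by blast
next
  assume pure_S: "pure (incl_upset P S)"
  have same_card: "\<exists>C'. incl_maxchain (incl_upset P S) C' \<and> card C' = card C"
    if "incl_maxchain P C" for C
  proof -
    have "P \<noteq> {}" using S unfolding incl_minimal_def by blast
    then obtain M where M: "incl_minimal P M" and C: "incl_maxchain (incl_upset P M) C"
      using incl_maxchain_in_upset[OF fin _ \<open>incl_maxchain P C\<close>] by blast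
    obtain h where h: "incl_iso h (incl_upset P M) (incl_upset P S)" using trans[OF M] by blast
    show ?thesis
      using incl_maxchain_image[OF h C] card_incl_maxchain_image[OF h C] by blast
  qed
  show "pure P" unfolding pure_def
  proof (intro allI impI)
    fix C D assume "incl_maxchain P C \<and> incl_maxchain P D"
    then show "card C = card D" using same_card pure_S unfolding pure_def by metis
  qed
qed

subsection \<open>Rack automorphisms\<close>

definition rack_hom_on :: "'a set \<Rightarrow> ('a \<Rightarrow> 'a \<Rightarrow> 'a) \<Rightarrow> ('a \<Rightarrow> 'a) \<Rightarrow> bool" where
  "rack_hom_on X op f \<longleftrightarrow> (\<forall>x\<in>X. \<forall>y\<in>X. f (op x y) = op (f x) (f y))"

lemma rack_hom_on_inv_into:
  assumes b: "bij_betw f X X" and h: "rack_hom_on X op f" and cl: "\<forall>x\<in>X. \<forall>y\<in>X. op x y \<in> X"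
  shows "rack_hom_on X op (inv_into X f)"
  unfolding rack_hom_on_def
proof (intro ballI)
  fix x y assume "x \<in> X" "y \<in> X"
  then have x: "inv_into X f x \<in> X" "f (inv_into X f x) = x"
    and y: "inv_into X f y \<in> X" "f (inv_into X f y) = y"
    using b by (auto simp: bij_betw_inv_into_right bij_betw_imp_surj_on inv_into_into)
  then have "f (op (inv_into X f x) (inv_into X f y)) = op x y"
    using h unfolding rack_hom_on_def by metis
  moreover have "op (inv_into X f x) (inv_into X f y) \<in> X" using cl x y by blast
  ultimately show "inv_into X f (op x y) = op (inv_into X f x) (inv_into X f y)"
    using b by (metis bij_betw_inv_into_left)
qed

lemma rack_hom_on_comp:
  "rack_hom_on X op f \<Longrightarrow> rack_hom_on X op g \<Longrightarrow> g ` X \<subseteq> X \<Longrightarrow> rack_hom_on X op (f \<circ> g)"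
  unfolding rack_hom_on_def by (simp add: image_subset_iff)

lemma rack_hom_on_translation:
  "rack X op \<Longrightarrow> a \<in> X \<Longrightarrow> rack_hom_on X op (op a)"
  unfolding rack_def rack_hom_on_def by blast

lemma Inn_automorphism:
  assumes "g \<in> Inn X op" and r: "rack X op"
  shows "bij_betw g X X \<and> rack_hom_on X op g"
  using assms(1)
proof induction
  case Inn_id
  then show ?case by (simp add: rack_hom_on_def bij_betw_id[unfolded id_def])
next
  case (Inn_phi g a)
  have "bij_betw (op a) X X" using r Inn_phi.hyps(2) unfolding rack_def by blast
  then show ?case
    using Inn_phi rack_hom_on_comp rack_hom_on_translation[OF r] bij_betw_trans
    by (metis bij_betw_imp_surj_on order_refl)
next
  case (Inn_phi_inv g a)
  have cl: "\<forall>x\<in>X. \<forall>y\<in>X. op x y \<in> X" and "bij_betw (op a) X X"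
    using r Inn_phi_inv.hyps(2) unfolding rack_def by blast+
  then have "bij_betw (inv_into X (op a)) X X" "rack_hom_on X op (inv_into X (op a))"
    using bij_betw_inv_into rack_hom_on_inv_into rack_hom_on_translation[OF r Inn_phi_inv.hyps(2)]
    by blast+
  then show ?case
    using Inn_phi_inv rack_hom_on_comp bij_betw_trans
    by (metis bij_betw_imp_surj_on order_refl)
qed

lemma subrack_image:
  assumes "T \<in> subracks X op" "f ` X \<subseteq> X" "rack_hom_on X op f"
  shows "f ` T \<in> subracks X op"
  using assms unfolding subracks_def rack_hom_on_def by (auto simp: subset_iff) (metis imageI)

lemma image_incl_iso_subracks:
  assumes r: "rack X op" and f: "bij_betw f X X" "rack_hom_on X op f"
  shows "incl_iso ((`) f) (subracks X op - {{}}) (subracks X op - {{}})"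
proof -
  let ?Q = "subracks X op - {{}}"
  have cl: "\<forall>x\<in>X. \<forall>y\<in>X. op x y \<in> X" using r unfolding rack_def by blast
  have QX: "T \<subseteq> X" if "T \<in> ?Q" for T using that unfolding subracks_def by blast
  have g: "bij_betw (inv_into X f) X X" "rack_hom_on X op (inv_into X f)"
    using bij_betw_inv_into[OF f(1)] rack_hom_on_inv_into[OF f cl] by auto
  have image_in: "k ` T \<in> ?Q" if T: "T \<in> ?Q" and k: "bij_betw k X X" "rack_hom_on X op k" for k T
  proof -
    have "k ` X \<subseteq> X" using k(1) by (simp add: bij_betw_imp_surj_on)
    then have "k ` T \<in> subracks X op" using T subrack_image k(2) by blast
    then show ?thesis using T by simp
  qed
  have surj: "f ` inv_into X f ` T = T" if "T \<in> ?Q" for T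
    using image_inv_into_cancel[OF bij_betw_imp_surj_on[OF f(1)] QX[OF that]] .
  have "(`) f ` ?Q = ?Q"
  proof
    show "(`) f ` ?Q \<subseteq> ?Q" using image_in f by blast
    show "?Q \<subseteq> (`) f ` ?Q"
    proof
      fix T assume "T \<in> ?Q"
      then show "T \<in> (`) f ` ?Q" using image_in[OF _ g] surj by (metis image_eqI)
    qed
  qed
  moreover have mono: "\<forall>A\<in>?Q. \<forall>B\<in>?Q. f ` A \<subseteq> f ` B \<longleftrightarrow> A \<subseteq> B"
  proof (intro ballI iffI)
    fix A B assume A: "A \<in> ?Q" and B: "B \<in> ?Q" and fAB: "f ` A \<subseteq> f ` B"
    show "A \<subseteq> B"
    proof
      fix a assume a: "a \<in> A"
      have "f a \<in> f ` B" using fAB a by (rule subsetD[OF _ imageI])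
      then show "a \<in> B"
        using inj_on_image_mem_iff[OF bij_betw_imp_inj_on[OF f(1)] subsetD[OF QX[OF A] a] QX[OF B]]
        by simp
    qed
  qed (rule image_mono)
  moreover have "inj_on ((`) f) ?Q"
  proof (rule inj_onI)
    fix A B assume "A \<in> ?Q" "B \<in> ?Q" "f ` A = f ` B"
    then have "A \<subseteq> B" and "B \<subseteq> A" using mono[rule_format, THEN iffD1] by simp_all
    then show "A = B" by (rule subset_antisym)
  qed
  ultimately show ?thesis unfolding incl_iso_def bij_betw_def by (intro conjI)
qed

lemma subracks_Int: "A \<in> subracks X op \<Longrightarrow> B \<in> subracks X op \<Longrightarrow> A \<inter> B \<in> subracks X op"
  unfolding subracks_def by blast

lemma connected_rack_minimal_subracks_conjugate:
  assumes r: "rack X op" and conn: "rack_connected X op"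
    and M: "incl_minimal (subracks X op - {{}}) M" and M': "incl_minimal (subracks X op - {{}}) M'"
  obtains f where "bij_betw f X X" and "rack_hom_on X op f" and "f ` M = M'"
proof -
  let ?Q = "subracks X op - {{}}"
  have "M \<in> ?Q" "M' \<in> ?Q" using M M' unfolding incl_minimal_def by simp_all
  then obtain x y where x: "x \<in> M" "x \<in> X" and y: "y \<in> M'" "y \<in> X"
    unfolding subracks_def by blast
  then obtain f where "f \<in> Inn X op" and fxy: "f x = y"
    using conn unfolding rack_connected_def by blast
  then have f: "bij_betw f X X" "rack_hom_on X op f" using Inn_automorphism r by blast+
  have fM: "incl_minimal ?Q (f ` M)"
    using incl_iso_minimal[OF image_incl_iso_subracks[OF r f] M] .
  have "f ` M \<inter> M' \<in> subracks X op"
    using fM M' unfolding incl_minimal_def by (simp add: subracks_Int)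
  moreover have "y \<in> f ` M \<inter> M'" using x y fxy by blast
  ultimately have I: "f ` M \<inter> M' \<in> ?Q" by blast
  have "f ` M \<inter> M' = f ` M" using incl_minimalD[OF fM I] by blast
  moreover have "f ` M \<inter> M' = M'" using incl_minimalD[OF M' I] by blast
  ultimately show ?thesis using that f by simp
qed

theorem mainTheorem6:
  fixes X :: "'a set" and op :: "'a \<Rightarrow> 'a \<Rightarrow> 'a" and S :: "'a set"
  assumes "rack X op" and "finite X" and "rack_connected X op"
    and "S \<in> proper_subracks X op"
    and "\<forall>T\<in>proper_subracks X op. T \<subseteq> S \<longrightarrow> T = S"
  shows "pure (subracks X op) \<longleftrightarrow> pure {T \<in> proper_subracks X op. S \<subseteq> T}"
proof -
  let ?Q = "subracks X op - {{}}"
  have subracks_Pow: "subracks X op \<subseteq> Pow X" and "X \<in> ?Q" "S \<noteq> X"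
    using assms(1,4) unfolding subracks_def proper_subracks_def rack_def by auto
  then have fin: "finite (subracks X op)" using assms(2) by (meson finite_Pow_iff finite_subset)
  have S: "incl_minimal ?Q S"
    using assms(4,5) subracks_Pow unfolding incl_minimal_def proper_subracks_def by blast
  have "pure (subracks X op) \<longleftrightarrow> pure ?Q"
    by (rule pure_remove_comparable[OF fin]) (auto simp: subracks_def)
  also have "\<dots> \<longleftrightarrow> pure (incl_upset ?Q S)"
  proof (rule pure_iff_pure_upset[OF _ S])
    fix M assume M: "incl_minimal ?Q M"
    then obtain f where f: "bij_betw f X X" "rack_hom_on X op f" "f ` M = S"
      using connected_rack_minimal_subracks_conjugate[OF assms(1,3) _ S] by blast
    then show "\<exists>h. incl_iso h (incl_upset ?Q M) (incl_upset ?Q S)"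
      using incl_iso_upset[OF image_incl_iso_subracks[OF assms(1) f(1,2)]] M
      unfolding incl_minimal_def by metis
  qed (use fin in blast)
  also have "\<dots> \<longleftrightarrow> pure (incl_upset ?Q S - {X})"
    by (rule pure_remove_comparable)
      (use fin subracks_Pow \<open>X \<in> ?Q\<close> S in \<open>auto simp: incl_upset_def incl_minimal_def\<close>)
  also have "incl_upset ?Q S - {X} = {T \<in> proper_subracks X op. S \<subseteq> T}"
    unfolding incl_upset_def proper_subracks_def by auto
  finally show ?thesis .
qed

end
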